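(* Let $n\ge 2$ and let $l$ be the correspondence defined on $\mathcal S_{\neq}$ by $l(S)=so(n)\setminus\mathcal L_{\mathrm{invar}}(o_1,\dots,o_n)$, where $o_1,\dots,o_n$ is an orthonormal basis of eigenvectors of $S$ (this is independent of the choice of such basis). Then $$\mathrm{Graph}(l)=\{(S,L):S\in\mathcal S_{\neq},\ L\in l(S)\}$$ is open and dense in $\mathcal S(n,\mathbb R)\times so(n)$ (product topology, each factor with the relative norm topology).
   Context: $\mathcal S(n,\mathbb R)$ denotes the real symmetric $n\times n$ matrices and $\mathcal S_{\neq}\subseteq\mathcal S(n,\mathbb R)$ those whose $n$ eigenvalues are pairwise distinct. $so(n)$ denotes the real skew-symmetric $n\times n$ matrices. For an orthonormal basis $o_1,\dots,o_n$ of $\mathbb R^n$, $\mathcal L_{\mathrm{invar}}(o_1,\dots,o_n)$ is the set of $L\in so(n)$ for which there exists a subset $\{o_{j_1},\dots,o_{j_k}\}$ with $1\le k<n$ such that $\mathrm{span}_{\mathbb R}\{o_{j_1},\dots,o_{j_k}\}$ is an invariant subspace of $L$. *)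

theory Defs
  imports "HOL-Analysis.Analysis"
begin

definition sym_mats :: "(real^'n^'n) set" where
  "sym_mats = {S. transpose S = S}"

definition skew_mats :: "(real^'n^'n) set" where
  "skew_mats = {L. transpose L = - L}"

definition eigenvalues :: "real^'n^'n \<Rightarrow> real set" where
  "eigenvalues S = {c. \<exists>v. v \<noteq> 0 \<and> S *v v = c *\<^sub>R v}"

definition sym_distinct :: "(real^'n^'n) set" where
  "sym_distinct = {S \<in> sym_mats. card (eigenvalues S) = CARD('n)}"

definition orthonormal_basis :: "('n \<Rightarrow> real^'n) \<Rightarrow> bool" where
  "orthonormal_basis ob \<longleftrightarrow> (\<forall>i j. ob i \<bullet> ob j = (if i = j then 1 else 0))"

definition eigenbasis :: "real^'n^'n \<Rightarrow> ('n \<Rightarrow> real^'n) \<Rightarrow> bool" where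
  "eigenbasis S ob \<longleftrightarrow> orthonormal_basis ob \<and> (\<forall>i. \<exists>c. S *v ob i = c *\<^sub>R ob i)"

definition L_invar :: "('n \<Rightarrow> real^'n) \<Rightarrow> (real^'n^'n) set" where
  "L_invar ob = {L \<in> skew_mats. \<exists>J::'n set. 1 \<le> card J \<and> card J < CARD('n) \<and>
       (\<forall>x \<in> span (ob ` J). L *v x \<in> span (ob ` J))}"

definition graph_l :: "((real^'n^'n) \<times> (real^'n^'n)) set" where
  "graph_l = {(S, L). S \<in> sym_distinct \<and>
       (\<exists>ob. eigenbasis S ob \<and> L \<in> skew_mats - L_invar ob)}"

end

theory Submission
  imports Defs
begin

text \<open>
  Fix an orthonormal eigenbasis \<open>ob\<close> of S.  The subspaces spanned by
  subfamilies of \<open>ob\<close> are invariant under L iff the corresponding off-diagonal blocks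
  of L in the basis \<open>ob\<close> vanish, so \<open>L_invar ob\<close> is cut out by finitely many
  linear equations.  When S has distinct eigenvalues, its eigenbasis is unique up to
  order and signs, so the graph is well defined independently of the basis.

  Density: by the spectral theorem (proved below via maximisation of the Rayleigh
  quotient) S has an eigenbasis \<open>ob\<close>; adding small multiples of a diagonal matrix with
  distinct entries, resp. of a skew matrix with nonzero off-diagonal entries, both
  written in the basis \<open>ob\<close>, moves (S, L) into the graph.

  Openness: if points outside the graph converge to (S, L) in the graph, a subsequence
  of their eigenbases converges (orthonormal bases form a compact set) to an eigenbasis
  of S; the approximating matrices eventually have distinct eigenvalues, so their
  skew parts lie in \<open>L_invar\<close>, a closed condition, whence \<open>L \<in> L_invar\<close>:
  a contradiction.
\<close>

lemma orthonormal_basisD [simp]: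
  "orthonormal_basis ob \<Longrightarrow> ob i \<bullet> ob j = (if i = j then 1 else 0)"
  unfolding orthonormal_basis_def by blast

text \<open>n orthonormal vectors are independent, hence span the n-dimensional space.\<close>
lemma orthonormal_basis_span:
  fixes ob :: "'n \<Rightarrow> real^'n"
  assumes ob: "orthonormal_basis ob"
  shows "span (range ob) = UNIV"
proof -
  have "pairwise orthogonal (range ob)"
    using ob by (auto simp: pairwise_def orthogonal_def)
  moreover have "0 \<notin> range ob"
    using ob by (metis imageE inner_zero_left orthonormal_basisD zero_neq_one)
  ultimately have indep: "independent (range ob)"
    by (rule pairwise_orthogonal_independent)
  have "inj ob"
    using ob by (metis injI orthonormal_basisD zero_neq_one)
  then have "card (range ob) = dim (UNIV :: (real^'n) set)"
    by (simp add: card_image)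
  then show ?thesis
    using card_eq_dim[of "range ob" UNIV] indep by auto
qed

lemma orthonormal_basis_expand:
  fixes ob :: "'n \<Rightarrow> real^'n"
  assumes ob: "orthonormal_basis ob"
  shows "x = (\<Sum>i\<in>UNIV. (ob i \<bullet> x) *\<^sub>R ob i)"
proof -
  define y where "y = x - (\<Sum>i\<in>UNIV. (ob i \<bullet> x) *\<^sub>R ob i)"
  have y_orth: "ob j \<bullet> y = 0" for j
  proof -
    have "ob j \<bullet> (\<Sum>i\<in>UNIV. (ob i \<bullet> x) *\<^sub>R ob i) = (\<Sum>i\<in>UNIV. (ob i \<bullet> x) * (ob j \<bullet> ob i))"
      by (simp add: inner_sum_right)
    also have "\<dots> = ob j \<bullet> x"
      using ob by (simp add: if_distrib cong: if_cong)
    finally show ?thesis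
      unfolding y_def by (simp add: inner_diff_right)
  qed
  have "orthogonal y a" if "a \<in> span (range ob)" for a
    using orthogonal_to_span[OF that, of y] y_orth
    unfolding orthogonal_def by (metis imageE inner_commute)
  then have "orthogonal y y"
    using orthonormal_basis_span[OF ob] by auto
  then show ?thesis
    unfolding y_def by (simp add: orthogonal_def)
qed

lemma orthonormal_basis_span_iff:
  fixes ob :: "'n \<Rightarrow> real^'n"
  assumes ob: "orthonormal_basis ob"
  shows "x \<in> span (ob ` J) \<longleftrightarrow> (\<forall>k. k \<notin> J \<longrightarrow> ob k \<bullet> x = 0)"
proof
  assume x: "x \<in> span (ob ` J)"
  show "\<forall>k. k \<notin> J \<longrightarrow> ob k \<bullet> x = 0"
  proof (intro allI impI)
    fix k assume "k \<notin> J"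
    then have "orthogonal (ob k) y" if "y \<in> ob ` J" for y
      using that ob by (auto simp: orthogonal_def)
    then show "ob k \<bullet> x = 0"
      using orthogonal_to_span[OF x] by (auto simp: orthogonal_def)
  qed
next
  assume h: "\<forall>k. k \<notin> J \<longrightarrow> ob k \<bullet> x = 0"
  have "x = (\<Sum>i\<in>UNIV. (ob i \<bullet> x) *\<^sub>R ob i)"
    by (rule orthonormal_basis_expand[OF ob])
  also have "\<dots> \<in> span (ob ` J)"
  proof (rule span_sum)
    fix i show "(ob i \<bullet> x) *\<^sub>R ob i \<in> span (ob ` J)"
      using h by (cases "i \<in> J") (auto intro: span_mul span_base span_zero)
  qed
  finally show "x \<in> span (ob ` J)" .
qed

lemma invariant_span_iff:
  fixes ob :: "'n \<Rightarrow> real^'n" and L :: "real^'n^'n"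
  assumes ob: "orthonormal_basis ob"
  shows "(\<forall>x\<in>span (ob ` J). L *v x \<in> span (ob ` J)) \<longleftrightarrow>
         (\<forall>j\<in>J. \<forall>k. k \<notin> J \<longrightarrow> ob k \<bullet> (L *v ob j) = 0)"
proof
  assume "\<forall>x\<in>span (ob ` J). L *v x \<in> span (ob ` J)"
  then show "\<forall>j\<in>J. \<forall>k. k \<notin> J \<longrightarrow> ob k \<bullet> (L *v ob j) = 0"
    using orthonormal_basis_span_iff[OF ob] by (meson imageI span_base)
next
  assume block: "\<forall>j\<in>J. \<forall>k. k \<notin> J \<longrightarrow> ob k \<bullet> (L *v ob j) = 0"
  show "\<forall>x\<in>span (ob ` J). L *v x \<in> span (ob ` J)"
  proof
    fix x assume x: "x \<in> span (ob ` J)"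
    then have x_out: "\<And>i. i \<notin> J \<Longrightarrow> ob i \<bullet> x = 0"
      using orthonormal_basis_span_iff[OF ob] by blast
    have "L *v x = L *v (\<Sum>i\<in>UNIV. (ob i \<bullet> x) *\<^sub>R ob i)"
      using orthonormal_basis_expand[OF ob] by metis
    also have "\<dots> = (\<Sum>i\<in>UNIV. (ob i \<bullet> x) *\<^sub>R (L *v ob i))"
      by (simp add: linear_sum[OF matrix_vector_mul_linear] linear_scale[OF matrix_vector_mul_linear])
    finally have Lx: "L *v x = (\<Sum>i\<in>UNIV. (ob i \<bullet> x) *\<^sub>R (L *v ob i))" .
    have "ob k \<bullet> (L *v x) = 0" if "k \<notin> J" for k
      unfolding Lx inner_sum_right using x_out block that
      by (intro sum.neutral) auto
    then show "L *v x \<in> span (ob ` J)"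
      using orthonormal_basis_span_iff[OF ob] by blast
  qed
qed

lemma L_invar_iff:
  fixes ob :: "'n \<Rightarrow> real^'n" and L :: "real^'n^'n"
  assumes "orthonormal_basis ob"
  shows "L \<in> L_invar ob \<longleftrightarrow> L \<in> skew_mats \<and> (\<exists>J::'n set. 1 \<le> card J \<and> card J < CARD('n) \<and>
     (\<forall>j\<in>J. \<forall>k. k \<notin> J \<longrightarrow> ob k \<bullet> (L *v ob j) = 0))"
  unfolding L_invar_def using invariant_span_iff[OF assms] by blast

lemma symmetric_inner:
  fixes S :: "real^'n^'n"
  assumes "transpose S = S"
  shows "(S *v x) \<bullet> y = x \<bullet> (S *v y)"
proof -
  have "S *v x = x v* S"
    using assms by (metis transpose_transpose vector_transpose_matrix)
  then show ?thesis by (simp add: dot_lmul_matrix)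
qed

lemma symmetric_eigenvectors_orthogonal:
  fixes S :: "real^'n^'n"
  assumes S: "transpose S = S" and u: "S *v u = a *\<^sub>R u" and v: "S *v v = b *\<^sub>R v"
    and "a \<noteq> b"
  shows "u \<bullet> v = 0"
proof -
  have "a * (u \<bullet> v) = b * (u \<bullet> v)"
    using symmetric_inner[OF S, of u v] u v by simp
  then show ?thesis using \<open>a \<noteq> b\<close> by simp
qed

lemma eigenbasis_eq:
  assumes "eigenbasis S ob"
  shows "S *v ob i = (ob i \<bullet> (S *v ob i)) *\<^sub>R ob i"
proof -
  obtain c where c: "S *v ob i = c *\<^sub>R ob i"
    using assms unfolding eigenbasis_def by blast
  have "ob i \<bullet> ob i = 1"
    using assms unfolding eigenbasis_def by simp
  then show ?thesis using c by simp
qed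

lemma eigenvalues_eq_range:
  fixes S :: "real^'n^'n"
  assumes S: "transpose S = S" and ob: "orthonormal_basis ob"
    and c: "\<And>i. S *v ob i = c i *\<^sub>R ob i"
  shows "eigenvalues S = range c"
proof
  show "range c \<subseteq> eigenvalues S"
  proof
    fix m assume "m \<in> range c"
    then obtain i where "m = c i" by auto
    moreover have "ob i \<noteq> 0" using ob by (metis inner_zero_left orthonormal_basisD zero_neq_one)
    ultimately show "m \<in> eigenvalues S" unfolding eigenvalues_def using c by blast
  qed
  show "eigenvalues S \<subseteq> range c"
  proof
    fix m assume "m \<in> eigenvalues S"
    then obtain v where v: "v \<noteq> 0" "S *v v = m *\<^sub>R v" unfolding eigenvalues_def by blast
    obtain i where i: "ob i \<bullet> v \<noteq> 0"
    proof (rule ccontr)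
      assume "\<not> thesis"
      then have "\<forall>i. ob i \<bullet> v = 0" using that by blast
      then have "v = 0" using orthonormal_basis_expand[OF ob, of v] by simp
      then show False using v(1) by simp
    qed
    then have "m = c i"
      using symmetric_eigenvectors_orthogonal[OF S c[of i] v(2)] by blast
    then show "m \<in> range c" by simp
  qed
qed

lemma sym_distinct_iff_inj:
  fixes S :: "real^'n^'n"
  assumes S: "transpose S = S" and ob: "orthonormal_basis ob"
    and c: "\<And>i. S *v ob i = c i *\<^sub>R ob i"
  shows "S \<in> sym_distinct \<longleftrightarrow> inj c"
proof -
  have "S \<in> sym_distinct \<longleftrightarrow> card (range c) = CARD('n)"
    unfolding sym_distinct_def sym_mats_def using S eigenvalues_eq_range[OF S ob c] by simp
  also have "\<dots> \<longleftrightarrow> inj c"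
    using inj_on_iff_eq_card[of UNIV c] by simp
  finally show ?thesis .
qed

lemma eigenbasis_unique:
  fixes S :: "real^'n^'n"
  assumes Sd: "S \<in> sym_distinct" and p: "eigenbasis S p" and ob: "eigenbasis S ob"
  obtains \<sigma> b where "inj \<sigma>" "\<And>i. b i \<noteq> 0" "\<And>i. p i = b i *\<^sub>R ob (\<sigma> i)"
proof -
  have S: "transpose S = S" using Sd unfolding sym_distinct_def sym_mats_def by auto
  have p_onb: "orthonormal_basis p" and ob_onb: "orthonormal_basis ob"
    using p ob unfolding eigenbasis_def by auto
  define c where "c i = ob i \<bullet> (S *v ob i)" for i
  define \<mu> where "\<mu> i = p i \<bullet> (S *v p i)" for i
  have c: "S *v ob i = c i *\<^sub>R ob i" for i unfolding c_def by (rule eigenbasis_eq[OF ob])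
  have \<mu>: "S *v p i = \<mu> i *\<^sub>R p i" for i unfolding \<mu>_def by (rule eigenbasis_eq[OF p])
  have "inj c" using sym_distinct_iff_inj[OF S ob_onb c] Sd by simp
  have "range \<mu> = range c"
    using eigenvalues_eq_range[OF S ob_onb c] eigenvalues_eq_range[OF S p_onb \<mu>] by simp
  then have "\<forall>i. \<exists>k. \<mu> i = c k" by (metis rangeE rangeI)
  then obtain \<sigma> where \<sigma>: "\<And>i. \<mu> i = c (\<sigma> i)" by metis
  define b where "b i = ob (\<sigma> i) \<bullet> p i" for i
  \<comment> \<open>\<open>p i\<close> is orthogonal to every \<open>ob k\<close> with a different eigenvalue, i.e. with \<open>k \<noteq> \<sigma> i\<close>\<close>
  have p_eq: "p i = b i *\<^sub>R ob (\<sigma> i)" for i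
  proof -
    have orth: "ob k \<bullet> p i = 0" if "k \<noteq> \<sigma> i" for k
    proof -
      have "c k \<noteq> \<mu> i" using \<open>inj c\<close> that unfolding \<sigma> by (auto dest: injD)
      then show ?thesis using symmetric_eigenvectors_orthogonal[OF S c \<mu>] by blast
    qed
    have "p i = (\<Sum>k\<in>UNIV. (ob k \<bullet> p i) *\<^sub>R ob k)"
      by (rule orthonormal_basis_expand[OF ob_onb])
    also have "\<dots> = (\<Sum>k\<in>UNIV. if k = \<sigma> i then (ob k \<bullet> p i) *\<^sub>R ob k else 0)"
      by (rule sum.cong) (auto simp: orth)
    finally show ?thesis by (simp add: b_def)
  qed
  have b: "b i \<noteq> 0" for i
  proof
    assume "b i = 0"
    then have "p i \<bullet> p i = 0" using p_eq[of i] by simp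
    then show False using p_onb by simp
  qed
  have "inj \<sigma>"
  proof
    fix i j assume "\<sigma> i = \<sigma> j"
    then have "p i \<bullet> p j = b i * b j"
      using p_eq[of i] p_eq[of j] ob_onb by simp
    moreover have "b i * b j \<noteq> 0" using b by simp
    ultimately show "i = j" using p_onb by (metis orthonormal_basisD)
  qed
  then show thesis using b p_eq by (rule that)
qed

text \<open>Consequently the coordinate subspaces, and hence \<open>L_invar\<close>, do not depend on
  the chosen eigenbasis.\<close>
lemma L_invar_eigenbasis_independent:
  fixes S L :: "real^'n^'n"
  assumes Sd: "S \<in> sym_distinct" and p: "eigenbasis S p" and ob: "eigenbasis S ob"
    and L: "L \<in> L_invar p"
  shows "L \<in> L_invar ob"
proof -
  obtain \<sigma> b where \<sigma>: "inj \<sigma>" and b: "\<And>i. b i \<noteq> 0" and p_eq: "\<And>i. p i = b i *\<^sub>R ob (\<sigma> i)"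
    using eigenbasis_unique[OF Sd p ob] by blast
  obtain J where skew: "L \<in> skew_mats" and J: "1 \<le> card J" "card J < CARD('n)"
    and inv: "\<forall>x\<in>span (p ` J). L *v x \<in> span (p ` J)"
    using L unfolding L_invar_def by blast
  have "span (p ` J) = span (ob ` \<sigma> ` J)"
    unfolding span_eq
  proof
    have "p i \<in> span (ob ` \<sigma> ` J)" if "i \<in> J" for i
      unfolding p_eq using that by (intro span_mul span_base) simp
    then show "p ` J \<subseteq> span (ob ` \<sigma> ` J)" by blast
    have "ob (\<sigma> i) \<in> span (p ` J)" if "i \<in> J" for i
    proof -
      have "ob (\<sigma> i) = (1 / b i) *\<^sub>R p i" using p_eq[of i] b[of i] by simp
      then show ?thesis using that by (metis image_eqI span_base span_mul)
    qed
    then show "ob ` \<sigma> ` J \<subseteq> span (p ` J)" by blast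
  qed
  moreover have "card (\<sigma> ` J) = card J"
    using \<sigma> by (simp add: card_image inj_on_subset)
  ultimately have "1 \<le> card (\<sigma> ` J) \<and> card (\<sigma> ` J) < CARD('n) \<and>
      (\<forall>x\<in>span (ob ` \<sigma> ` J). L *v x \<in> span (ob ` \<sigma> ` J))"
    using J inv by simp
  then show ?thesis
    unfolding L_invar_def using skew by blast
qed

lemma graph_l_iff:
  fixes S L :: "real^'n^'n"
  assumes Sd: "S \<in> sym_distinct" and ob: "eigenbasis S ob"
  shows "(S, L) \<in> graph_l \<longleftrightarrow> L \<in> skew_mats \<and> L \<notin> L_invar ob"
  unfolding graph_l_def using Sd ob L_invar_eigenbasis_independent by blast

lemma quadratic_nonpos_imp_linear_zero:
  fixes g h :: real
  assumes "\<And>t. 2*t*g + t\<^sup>2*h \<le> 0"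
  shows "g = 0"
proof (rule ccontr)
  assume g: "g \<noteq> 0"
  define a where "a = \<bar>h\<bar> + 1"
  have a: "a > 0" "2*a + h > 0" unfolding a_def by auto
  have "2*(g/a)*g + (g/a)\<^sup>2*h \<le> 0" using assms .
  then have "g\<^sup>2 * (2*a + h) / a\<^sup>2 \<le> 0" using a by (simp add: field_simps power2_eq_square)
  moreover have "g\<^sup>2 * (2*a + h) / a\<^sup>2 > 0" using a g by simp
  ultimately show False by simp
qed

lemma rayleigh_max_is_eigenvector:
  fixes S :: "real^'n^'n"
  assumes S: "transpose S = S" and W: "subspace W" and SW: "\<And>x. x \<in> W \<Longrightarrow> S *v x \<in> W"
    and v: "v \<in> W" "v \<bullet> v = 1"
    and max: "\<And>x. x \<in> W \<Longrightarrow> x \<bullet> (S *v x) \<le> (v \<bullet> (S *v v)) * (x \<bullet> x)"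
  shows "S *v v = (v \<bullet> (S *v v)) *\<^sub>R v"
proof -
  define lam where "lam = v \<bullet> (S *v v)"
  have orth: "w \<bullet> (S *v v - lam *\<^sub>R v) = 0" if w: "w \<in> W" for w
  proof (rule quadratic_nonpos_imp_linear_zero)
    fix t :: real
    have Svw: "v \<bullet> (S *v w) = w \<bullet> (S *v v)"
      using symmetric_inner[OF S, of v w] by (simp add: inner_commute)
    have "v + t *\<^sub>R w \<in> W" using W v w by (simp add: subspace_add subspace_scale)
    then have "(v + t *\<^sub>R w) \<bullet> (S *v (v + t *\<^sub>R w)) \<le> lam * ((v + t *\<^sub>R w) \<bullet> (v + t *\<^sub>R w))"
      unfolding lam_def by (rule max)
    then show "2*t*(w \<bullet> (S *v v - lam *\<^sub>R v)) + t\<^sup>2*(w \<bullet> (S *v w) - lam * (w \<bullet> w)) \<le> 0"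
      using v(2) Svw
      by (simp add: matrix_vector_right_distrib matrix_vector_mult_scaleR inner_add_left
          inner_add_right inner_diff_right inner_commute power2_eq_square algebra_simps lam_def)
  qed
  have "S *v v - lam *\<^sub>R v \<in> W" using W v SW by (simp add: subspace_diff subspace_scale)
  then have "(S *v v - lam *\<^sub>R v) \<bullet> (S *v v - lam *\<^sub>R v) = 0" by (rule orth)
  then show ?thesis unfolding lam_def by simp
qed

lemma rayleigh_max_exists:
  fixes S :: "real^'n^'n" and W :: "(real^'n) set"
  assumes W: "subspace W" and nonzero: "x0 \<in> W" "x0 \<noteq> 0"
  obtains v where "v \<in> W" "v \<bullet> v = 1" "\<And>x. x \<in> W \<Longrightarrow> x \<bullet> (S *v x) \<le> (v \<bullet> (S *v v)) * (x \<bullet> x)"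
proof -
  define q where "q x = x \<bullet> (S *v x)" for x
  define K where "K = sphere 0 1 \<inter> W"
  have "compact K"
    unfolding K_def using closed_subspace[OF W] by (intro compact_Int_closed compact_sphere)
  moreover have "(1 / norm x0) *\<^sub>R x0 \<in> K"
    unfolding K_def using nonzero W by (simp add: subspace_scale)
  moreover have "continuous_on K q"
    unfolding q_def by (intro continuous_intros matrix_vector_mult_linear_continuous_on)
  ultimately obtain v where vK: "v \<in> K" and vmax: "\<And>y. y \<in> K \<Longrightarrow> q y \<le> q v"
    using continuous_attains_sup[of K q] by blast
  have "q x \<le> q v * (x \<bullet> x)" if x: "x \<in> W" for x
  proof (cases "x = 0")
    case True then show ?thesis by (simp add: q_def)
  next
    case False
    have "(1 / norm x) *\<^sub>R x \<in> K" unfolding K_def using False x W by (simp add: subspace_scale)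
    then have "q ((1 / norm x) *\<^sub>R x) \<le> q v" by (rule vmax)
    moreover have "q ((1 / norm x) *\<^sub>R x) = q x / (x \<bullet> x)"
      by (simp add: q_def matrix_vector_mult_scaleR power2_norm_eq_inner[symmetric] power2_eq_square)
    ultimately show ?thesis using False by (simp add: field_simps)
  qed
  moreover have "v \<in> W" "v \<bullet> v = 1" using vK unfolding K_def by (auto simp: norm_eq_1)
  ultimately show thesis using that unfolding q_def by blast
qed

lemma symmetric_eigenvector_in_invariant_subspace:
  fixes S :: "real^'n^'n"
  assumes S: "transpose S = S" and W: "subspace W" and SW: "\<And>x. x \<in> W \<Longrightarrow> S *v x \<in> W"
    and nonzero: "x0 \<in> W" "x0 \<noteq> 0"
  obtains v c where "v \<in> W" "v \<bullet> v = 1" "S *v v = c *\<^sub>R v"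
  using rayleigh_max_exists[OF W nonzero, of S] rayleigh_max_is_eigenvector[OF S W SW] that
  by metis

text \<open>The orthogonal complement of a family of eigenvectors is invariant, so a
  too small orthonormal family of eigenvectors can be extended.\<close>
lemma orthonormal_eigenvectors_extend:
  fixes S :: "real^'n^'n" and U :: "(real^'n) set"
  assumes S: "transpose S = S" and fin: "finite U" and small: "card U < CARD('n)"
    and eig: "\<And>u. u \<in> U \<Longrightarrow> \<exists>c. S *v u = c *\<^sub>R u"
  obtains v where "v \<notin> U" "v \<bullet> v = 1" "\<forall>u\<in>U. u \<bullet> v = 0" "\<exists>c. S *v v = c *\<^sub>R v"
proof -
  define W where "W = {x. \<forall>u\<in>U. orthogonal u x}"
  have W: "subspace W" unfolding W_def by (rule subspace_orthogonal_to_vectors)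
  have invariant: "S *v x \<in> W" if x: "x \<in> W" for x
  proof -
    have "orthogonal u (S *v x)" if u: "u \<in> U" for u
    proof -
      obtain c where c: "S *v u = c *\<^sub>R u" using eig[OF u] by blast
      have "u \<bullet> (S *v x) = c * (u \<bullet> x)" using symmetric_inner[OF S, of u x] c by simp
      then show ?thesis using x u unfolding W_def orthogonal_def by simp
    qed
    then show ?thesis unfolding W_def by blast
  qed
  have "dim U < DIM(real^'n)" using dim_le_card'[OF fin] small by simp
  then obtain x0 where x0: "x0 \<noteq> 0" "\<And>y. y \<in> span U \<Longrightarrow> orthogonal x0 y"
    using orthogonal_to_subspace_exists by blast
  then have "x0 \<in> W" unfolding W_def by (auto intro: span_base simp: orthogonal_commute)
  then obtain v c where v: "v \<in> W" "v \<bullet> v = 1" "S *v v = c *\<^sub>R v"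
    using symmetric_eigenvector_in_invariant_subspace[OF S W invariant _ x0(1)] by blast
  have "v \<notin> U" using v unfolding W_def orthogonal_def by auto
  then show thesis using that v unfolding W_def orthogonal_def by blast
qed

lemma symmetric_orthonormal_eigenvectors:
  fixes S :: "real^'n^'n"
  assumes S: "transpose S = S" and "k \<le> CARD('n)"
  shows "\<exists>U. finite U \<and> card U = k \<and> (\<forall>u\<in>U. \<forall>w\<in>U. u \<bullet> w = (if u = w then 1 else 0)) \<and>
     (\<forall>u\<in>U. \<exists>c. S *v u = c *\<^sub>R u)"
  using \<open>k \<le> CARD('n)\<close>
proof (induction k)
  case 0
  then show ?case by (intro exI[of _ "{}"]) auto
next
  case (Suc k)
  then obtain U where U: "finite U" "card U = k" "\<forall>u\<in>U. \<forall>w\<in>U. u \<bullet> w = (if u = w then 1 else 0)"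
    "\<forall>u\<in>U. \<exists>c. S *v u = c *\<^sub>R u" by auto
  obtain v where v: "v \<notin> U" "v \<bullet> v = 1" "\<forall>u\<in>U. u \<bullet> v = 0" "\<exists>c. S *v v = c *\<^sub>R v"
    using orthonormal_eigenvectors_extend[OF S U(1)] U Suc.prems by auto
  show ?case
  proof (intro exI[of _ "insert v U"] conjI)
    show "card (insert v U) = Suc k" using U v by simp
    show "\<forall>u\<in>insert v U. \<forall>w\<in>insert v U. u \<bullet> w = (if u = w then 1 else 0)"
      using U(3) v by (auto simp: inner_commute)
  qed (use U v in auto)
qed

lemma symmetric_eigenbasis_exists:
  fixes S :: "real^'n^'n"
  assumes S: "transpose S = S"
  obtains ob where "eigenbasis S ob"
proof -
  obtain U where U: "finite U" "card U = CARD('n)" "\<forall>u\<in>U. \<forall>w\<in>U. u \<bullet> w = (if u = w then 1 else 0)"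
    "\<forall>u\<in>U. \<exists>c. S *v u = c *\<^sub>R u"
    using symmetric_orthonormal_eigenvectors[OF S, of "CARD('n)"] by auto
  then obtain f where f: "bij_betw f (UNIV::'n set) U"
    using finite_same_card_bij[of "UNIV::'n set" U] by auto
  then have "f i \<in> U" "f i = f j \<longleftrightarrow> i = j" for i j
    by (auto simp: bij_betw_def inj_on_def)
  then have "eigenbasis S f"
    unfolding eigenbasis_def orthonormal_basis_def using U(3,4) by metis
  then show thesis by (rule that)
qed

text \<open>The matrix whose entry in row \<open>ob k\<close>, column \<open>ob j\<close> (with respect to the
  orthonormal basis \<open>ob\<close>) is \<open>W j k\<close>; used to build perturbations.\<close>
definition basis_matrix :: "('n \<Rightarrow> real^'n) \<Rightarrow> ('n \<Rightarrow> 'n \<Rightarrow> real) \<Rightarrow> real^'n^'n" where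
  "basis_matrix ob W = (\<chi> a b. \<Sum>j\<in>UNIV. \<Sum>k\<in>UNIV. W j k * (ob k $ a) * (ob j $ b))"

lemma basis_matrix_mult:
  "basis_matrix ob W *v x = (\<Sum>j\<in>UNIV. \<Sum>k\<in>UNIV. (W j k * (ob j \<bullet> x)) *\<^sub>R ob k)"
proof -
  have "(basis_matrix ob W *v x) $ a = (\<Sum>j\<in>UNIV. \<Sum>k\<in>UNIV. (W j k * (ob j \<bullet> x)) *\<^sub>R ob k) $ a" for a
  proof -
    have "(basis_matrix ob W *v x) $ a =
        (\<Sum>b\<in>UNIV. \<Sum>j\<in>UNIV. \<Sum>k\<in>UNIV. W j k * (ob k $ a) * (ob j $ b) * x $ b)"
      by (simp add: basis_matrix_def matrix_vector_mult_def sum_distrib_right)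
    also have "\<dots> = (\<Sum>j\<in>UNIV. \<Sum>k\<in>UNIV. \<Sum>b\<in>UNIV. W j k * (ob k $ a) * (ob j $ b) * x $ b)"
      by (subst sum.swap) (rule sum.cong[OF refl], rule sum.swap)
    also have "\<dots> = (\<Sum>j\<in>UNIV. \<Sum>k\<in>UNIV. W j k * (ob j \<bullet> x) * ob k $ a)"
      by (simp add: inner_vec_def sum_distrib_left sum_distrib_right algebra_simps)
    finally show ?thesis by (simp add: sum_component)
  qed
  then show ?thesis by (simp add: vec_eq_iff)
qed

lemma basis_matrix_on_basis:
  assumes ob: "orthonormal_basis ob"
  shows "basis_matrix ob W *v ob j = (\<Sum>k\<in>UNIV. W j k *\<^sub>R ob k)"
proof -
  have "basis_matrix ob W *v ob j = (\<Sum>i\<in>UNIV. if i = j then (\<Sum>k\<in>UNIV. W j k *\<^sub>R ob k) else 0)"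
    unfolding basis_matrix_mult using ob by (intro sum.cong) (auto simp: scaleR_sum_left)
  then show ?thesis by simp
qed

lemma basis_matrix_entry:
  assumes ob: "orthonormal_basis ob"
  shows "ob k \<bullet> (basis_matrix ob W *v ob j) = W j k"
proof -
  have "ob k \<bullet> (basis_matrix ob W *v ob j) = (\<Sum>i\<in>UNIV. if i = k then W j k else 0)"
    unfolding basis_matrix_on_basis[OF ob] inner_sum_right using ob by (intro sum.cong) auto
  then show ?thesis by simp
qed

lemma basis_matrix_transpose: "transpose (basis_matrix ob W) = basis_matrix ob (\<lambda>j k. W k j)"
proof -
  have "(\<Sum>j\<in>UNIV. \<Sum>k\<in>UNIV. W j k * (ob k $ b) * (ob j $ a)) =
        (\<Sum>j\<in>UNIV. \<Sum>k\<in>UNIV. W k j * (ob k $ a) * (ob j $ b))" for a b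
    by (subst sum.swap) (simp add: mult_ac)
  then show ?thesis unfolding basis_matrix_def transpose_def by (simp add: vec_eq_iff)
qed

lemma transpose_plus: "transpose (A + B) = transpose A + transpose (B :: real^'n^'n)"
  by (simp add: transpose_def vec_eq_iff)

lemma small_multiple_avoiding:
  fixes x :: "'a::real_normed_vector" and B :: "real set"
  assumes "finite B" "e > 0"
  obtains d where "d \<notin> B" "norm (d *\<^sub>R x) < e"
proof -
  have "infinite ({0<..<e / (norm x + 1)} - B)"
    using assms by (simp add: Diff_infinite_finite add_nonneg_pos)
  then obtain d where d: "0 < d" "d < e / (norm x + 1)" "d \<notin> B"
    by (metis Diff_iff ex_in_conv finite.emptyI greaterThanLessThan_iff)
  have "norm (d *\<^sub>R x) \<le> d * (norm x + 1)" using d(1) by simp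
  also have "\<dots> < e" using d(2) by (simp add: pos_less_divide_eq add_nonneg_pos)
  finally show thesis using that d(3) by blast
qed

lemma exists_inj_real: "\<exists>r :: 'a::finite \<Rightarrow> real. inj r"
proof -
  obtain r0 :: "'a \<Rightarrow> nat" where "inj r0"
    using finite_imp_inj_to_nat_seg[of "UNIV :: 'a set"] by auto
  then have "inj (\<lambda>i. real (r0 i))" by (auto simp: inj_def)
  then show ?thesis by blast
qed

text \<open>Density of \<open>sym_distinct\<close>: adding a small multiple of a matrix diagonal in
  the eigenbasis with distinct diagonal entries separates all eigenvalues.\<close>
lemma perturb_to_distinct_eigenvalues:
  fixes S :: "real^'n^'n"
  assumes S: "S \<in> sym_mats" and ob: "eigenbasis S ob" and e: "e > 0"
  obtains S' where "S' \<in> sym_distinct" "eigenbasis S' ob" "dist S' S < e"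
proof -
  have ob_onb: "orthonormal_basis ob" using ob unfolding eigenbasis_def by simp
  define c where "c i = ob i \<bullet> (S *v ob i)" for i
  have c: "S *v ob i = c i *\<^sub>R ob i" for i unfolding c_def by (rule eigenbasis_eq[OF ob])
  obtain r :: "'n \<Rightarrow> real" where r: "inj r" using exists_inj_real by blast
  define M where "M = basis_matrix ob (\<lambda>j k. if j = k then r j else 0)"
  have "(\<lambda>j k. if k = j then r k else 0) = (\<lambda>j k. if j = k then r j else (0::real))"
    by (auto simp: fun_eq_iff)
  then have M_sym: "transpose M = M"
    unfolding M_def basis_matrix_transpose by simp
  have M_ob: "M *v ob j = r j *\<^sub>R ob j" for j
  proof -
    have "(\<Sum>k\<in>UNIV. (if j = k then r j else 0) *\<^sub>R ob k) = (\<Sum>k\<in>UNIV. if k = j then r j *\<^sub>R ob j else 0)"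
      by (rule sum.cong) auto
    then show ?thesis unfolding M_def basis_matrix_on_basis[OF ob_onb] by simp
  qed
  \<comment> \<open>the new eigenvalues \<open>c i + d * r i\<close> can only collide for finitely many \<open>d\<close>\<close>
  define B where "B = (\<lambda>(i, j). (c j - c i) / (r i - r j)) ` (UNIV :: ('n \<times> 'n) set)"
  obtain d where d: "d \<notin> B" "norm (d *\<^sub>R M) < e"
    using small_multiple_avoiding[of B e M] e unfolding B_def by auto
  define S' where "S' = S + d *\<^sub>R M"
  have S'_ob: "S' *v ob i = (c i + d * r i) *\<^sub>R ob i" for i
    unfolding S'_def by (simp add: matrix_vector_mult_add_rdistrib c M_ob
        scaleR_matrix_vector_assoc[symmetric] scaleR_add_left)
  have S'_sym: "transpose S' = S'"
    using S M_sym unfolding S'_def sym_mats_def by (simp add: transpose_plus transpose_scalar)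
  have "inj (\<lambda>i. c i + d * r i)"
  proof
    fix i j assume eq: "c i + d * r i = c j + d * r j"
    show "i = j"
    proof (rule ccontr)
      assume "i \<noteq> j"
      then have "r i - r j \<noteq> 0" using r by (auto dest: injD)
      then have "d = (c j - c i) / (r i - r j)" using eq by (simp add: field_simps)
      then have "d \<in> B" unfolding B_def by (auto intro!: image_eqI[of _ _ "(i, j)"])
      then show False using d(1) by simp
    qed
  qed
  then have "S' \<in> sym_distinct" using sym_distinct_iff_inj[OF S'_sym ob_onb S'_ob] by simp
  moreover have "eigenbasis S' ob" unfolding eigenbasis_def using ob_onb S'_ob by blast
  moreover have "dist S' S < e" using d(2) unfolding S'_def by (simp add: dist_norm)
  ultimately show thesis by (rule that)
qed

lemma not_L_invar_if_offdiagonal_nonzero: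
  fixes L :: "real^'n^'n"
  assumes ob: "orthonormal_basis ob" and offdiag: "\<And>j k. j \<noteq> k \<Longrightarrow> ob k \<bullet> (L *v ob j) \<noteq> 0"
  shows "L \<notin> L_invar ob"
proof
  assume "L \<in> L_invar ob"
  then obtain J :: "'n set" where J: "1 \<le> card J" "card J < CARD('n)"
    and block: "\<forall>j\<in>J. \<forall>k. k \<notin> J \<longrightarrow> ob k \<bullet> (L *v ob j) = 0"
    using L_invar_iff[OF ob] by blast
  obtain j where "j \<in> J" using J(1) by fastforce
  moreover obtain k where "k \<notin> J" using J(2) by (metis UNIV_I card_mono finite subsetI not_le)
  ultimately show False using block offdiag[of j k] by auto
qed

text \<open>Density of the complement of \<open>L_invar ob\<close> in \<open>so(n)\<close>: adding a small multiple
  of a skew matrix with nonzero off-diagonal entries makes all of them nonzero.\<close>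
lemma perturb_out_of_L_invar:
  fixes L :: "real^'n^'n"
  assumes ob: "orthonormal_basis ob" and L: "L \<in> skew_mats" and e: "e > 0"
  obtains L' where "L' \<in> skew_mats" "L' \<notin> L_invar ob" "dist L' L < e"
proof -
  obtain r :: "'n \<Rightarrow> real" where r: "inj r" using exists_inj_real by blast
  \<comment> \<open>a skew matrix all of whose off-diagonal entries in the basis \<open>ob\<close> are \<open>\<plusminus>1\<close>\<close>
  define w where "w j k = (if r j < r k then 1 else if r k < r j then -1 else 0 :: real)" for j k
  define N where "N = basis_matrix ob w"
  have N_skew: "transpose N = - N"
  proof -
    have "(\<lambda>j k. w k j) = (\<lambda>j k. - w j k)" unfolding w_def by (auto simp: fun_eq_iff)
    moreover have "basis_matrix ob (\<lambda>j k. - w j k) = - N"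
      unfolding N_def basis_matrix_def by (simp add: vec_eq_iff sum_negf)
    ultimately show ?thesis unfolding N_def basis_matrix_transpose by simp
  qed
  have w_nonzero: "w j k \<noteq> 0" if "j \<noteq> k" for j k
    using that r unfolding w_def by (auto dest: injD)
  define B where "B = (\<lambda>(j, k). - (ob k \<bullet> (L *v ob j)) / w j k) ` (UNIV :: ('n \<times> 'n) set)"
  obtain d where d: "d \<notin> B" "norm (d *\<^sub>R N) < e"
    using small_multiple_avoiding[of B e N] e unfolding B_def by auto
  define L' where "L' = L + d *\<^sub>R N"
  have entry: "ob k \<bullet> (L' *v ob j) = ob k \<bullet> (L *v ob j) + d * w j k" for j k
    unfolding L'_def N_def
    by (simp add: matrix_vector_mult_add_rdistrib inner_add_right
        scaleR_matrix_vector_assoc[symmetric] basis_matrix_entry[OF ob])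
  have "ob k \<bullet> (L' *v ob j) \<noteq> 0" if jk: "j \<noteq> k" for j k
  proof
    assume "ob k \<bullet> (L' *v ob j) = 0"
    then have "d = - (ob k \<bullet> (L *v ob j)) / w j k"
      using w_nonzero[OF jk] unfolding entry by (simp add: field_simps)
    then have "d \<in> B" unfolding B_def by (auto intro!: image_eqI[of _ _ "(j, k)"])
    then show False using d(1) by simp
  qed
  then have "L' \<notin> L_invar ob" by (rule not_L_invar_if_offdiagonal_nonzero[OF ob])
  moreover have "L' \<in> skew_mats"
    using L N_skew unfolding L'_def skew_mats_def by (simp add: transpose_plus transpose_scalar)
  moreover have "dist L' L < e" using d(2) unfolding L'_def by (simp add: dist_norm)
  ultimately show thesis using that by blast
qed

lemma graph_l_approachable:
  fixes S L :: "real^'n^'n"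
  assumes S: "S \<in> sym_mats" and L: "L \<in> skew_mats" and e: "e > 0"
  shows "\<exists>y\<in>graph_l. dist y (S, L) < e"
proof -
  obtain ob where ob: "eigenbasis S ob"
    using symmetric_eigenbasis_exists S unfolding sym_mats_def by blast
  have "e / 2 > 0" using e by simp
  then obtain S' where S': "S' \<in> sym_distinct" "eigenbasis S' ob" "dist S' S < e / 2"
    using perturb_to_distinct_eigenvalues[OF S ob] by blast
  obtain L' where L': "L' \<in> skew_mats" "L' \<notin> L_invar ob" "dist L' L < e / 2"
    using perturb_out_of_L_invar ob \<open>e / 2 > 0\<close> L unfolding eigenbasis_def by blast
  have "(S', L') \<in> graph_l" using graph_l_iff[OF S'(1,2)] L'(1,2) by blast
  moreover have "dist (S', L') (S, L) < e"
    using sqrt_sum_squares_le_sum_abs[of "dist S' S" "dist L' L"] S'(3) L'(3)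
    unfolding dist_Pair_Pair by simp
  ultimately show ?thesis by blast
qed

lemma tendsto_matrix_vector_mult [tendsto_intros]:
  fixes A :: "'a \<Rightarrow> real^'n^'m"
  assumes "(A \<longlongrightarrow> A0) F" "(x \<longlongrightarrow> x0) F"
  shows "((\<lambda>t. A t *v x t) \<longlongrightarrow> A0 *v x0) F"
  unfolding matrix_vector_mult_def by (intro tendsto_intros assms)

lemma graph_l_dense:
  "sym_mats \<times> skew_mats \<subseteq> closure (graph_l :: ((real^'n^'n) \<times> (real^'n^'n)) set)"
proof
  fix z :: "(real^'n^'n) \<times> (real^'n^'n)"
  assume "z \<in> sym_mats \<times> skew_mats"
  then show "z \<in> closure graph_l"
    unfolding closure_approachable using graph_l_approachable[of "fst z" "snd z"] by auto
qed

lemma frequently_ex_finite: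
  fixes P :: "'a \<Rightarrow> 'b::finite \<Rightarrow> bool"
  assumes "\<exists>\<^sub>F x in F. \<exists>y. P x y"
  shows "\<exists>y. \<exists>\<^sub>F x in F. P x y"
proof (rule ccontr)
  assume "\<nexists>y. \<exists>\<^sub>F x in F. P x y"
  then have "\<forall>\<^sub>F x in F. \<forall>y. \<not> P x y"
    by (intro eventually_all_finite) (simp add: not_frequently)
  then show False using assms by (simp add: frequently_def)
qed

lemma orthonormal_bases_convergent_subseq:
  fixes ob :: "nat \<Rightarrow> 'n \<Rightarrow> real^'n"
  assumes ob: "\<And>m. orthonormal_basis (ob m)"
  obtains r po where "strict_mono r" "\<And>i. (\<lambda>m. ob (r m) i) \<longlonglongrightarrow> po i" "orthonormal_basis po"
proof -
  define P where "P m = (\<chi> i. ob m i)" for m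
  have "norm (P m) \<le> real CARD('n)" for m
  proof -
    have "norm (P m) \<le> (\<Sum>i\<in>UNIV. norm (P m $ i))"
      unfolding norm_vec_def by (rule L2_set_le_sum) simp
    also have "\<dots> = real CARD('n)"
    proof -
      have "norm (ob m i) = 1" for i using ob[of m] by (simp add: norm_eq_1)
      then show ?thesis by (simp add: P_def)
    qed
    finally show ?thesis .
  qed
  then have "bounded (range P)" by (intro boundedI) blast
  then obtain Q r where r: "strict_mono (r :: nat \<Rightarrow> nat)" and PQ: "(P \<circ> r) \<longlonglongrightarrow> Q"
    using bounded_imp_convergent_subsequence by blast
  have lim: "(\<lambda>m. ob (r m) i) \<longlonglongrightarrow> Q $ i" for i
    using tendsto_vec_nth[OF PQ, of i] by (simp add: P_def o_def)
  have "orthonormal_basis (\<lambda>i. Q $ i)"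
    unfolding orthonormal_basis_def
  proof (intro allI)
    fix i j
    have "(\<lambda>m. ob (r m) i \<bullet> ob (r m) j) \<longlonglongrightarrow> Q $ i \<bullet> Q $ j" by (intro tendsto_intros lim)
    moreover have "(\<lambda>m. ob (r m) i \<bullet> ob (r m) j) = (\<lambda>m. if i = j then 1 else 0)" using ob by simp
    ultimately show "Q $ i \<bullet> Q $ j = (if i = j then 1 else 0)" using LIMSEQ_unique tendsto_const by metis
  qed
  then show thesis using that r lim by blast
qed

lemma eigenbasis_limit:
  fixes Sm :: "nat \<Rightarrow> real^'n^'n"
  assumes S: "Sm \<longlonglongrightarrow> S" and ob: "\<And>m. eigenbasis (Sm m) (ob m)"
    and lim: "\<And>i. (\<lambda>m. ob m i) \<longlonglongrightarrow> po i" and po: "orthonormal_basis po"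
  shows "eigenbasis S po"
proof -
  have "S *v po i = (po i \<bullet> (S *v po i)) *\<^sub>R po i" for i
  proof -
    have "(\<lambda>m. Sm m *v ob m i) \<longlonglongrightarrow> S *v po i" by (intro tendsto_intros S lim)
    moreover have "(\<lambda>m. Sm m *v ob m i) \<longlonglongrightarrow> (po i \<bullet> (S *v po i)) *\<^sub>R po i"
      by (subst eigenbasis_eq[OF ob]) (intro tendsto_intros S lim)
    ultimately show ?thesis by (rule LIMSEQ_unique)
  qed
  then show ?thesis unfolding eigenbasis_def using po by blast
qed

text \<open>Having distinct eigenvalues is an open condition, seen along a sequence whose
  eigenbases converge: the eigenvalues converge along with the basis vectors.\<close>
lemma sym_distinct_eventually:
  fixes Sm :: "nat \<Rightarrow> real^'n^'n"
  assumes S: "Sm \<longlonglongrightarrow> S" "S \<in> sym_distinct" and Sm: "\<And>m. Sm m \<in> sym_mats"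
    and ob: "\<And>m. eigenbasis (Sm m) (ob m)"
    and lim: "\<And>i. (\<lambda>m. ob m i) \<longlonglongrightarrow> po i" and po: "orthonormal_basis po"
  shows "\<forall>\<^sub>F m in sequentially. Sm m \<in> sym_distinct"
proof -
  define c where "c m i = ob m i \<bullet> (Sm m *v ob m i)" for m i
  define \<mu> where "\<mu> i = po i \<bullet> (S *v po i)" for i
  have c_lim: "(\<lambda>m. c m i) \<longlonglongrightarrow> \<mu> i" for i
    unfolding c_def \<mu>_def by (intro tendsto_intros S lim)
  have "inj \<mu>"
    using sym_distinct_iff_inj[of S po \<mu>] eigenbasis_eq[OF eigenbasis_limit[OF S(1) ob lim po]] S(2) po
    unfolding \<mu>_def sym_distinct_def sym_mats_def by blast
  have "\<forall>\<^sub>F m in sequentially. c m i \<noteq> c m j" if "i \<noteq> j" for i j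
  proof -
    have "\<mu> i - \<mu> j \<noteq> 0" using \<open>inj \<mu>\<close> that by (auto dest: injD)
    moreover have "(\<lambda>m. c m i - c m j) \<longlonglongrightarrow> \<mu> i - \<mu> j" by (intro tendsto_intros c_lim)
    ultimately have "\<forall>\<^sub>F m in sequentially. c m i - c m j \<noteq> 0"
      using tendsto_imp_eventually_ne by blast
    then show ?thesis by (rule eventually_mono) simp
  qed
  then have "\<forall>\<^sub>F m in sequentially. \<forall>i j. i \<noteq> j \<longrightarrow> c m i \<noteq> c m j"
    by (intro eventually_all_finite) auto
  then show ?thesis
  proof (rule eventually_mono)
    fix m assume "\<forall>i j. i \<noteq> j \<longrightarrow> c m i \<noteq> c m j"
    then have "inj (c m)" by (auto simp: inj_def)
    moreover have "orthonormal_basis (ob m)" using ob unfolding eigenbasis_def by blast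
    moreover have "Sm m *v ob m i = c m i *\<^sub>R ob m i" for i unfolding c_def by (rule eigenbasis_eq[OF ob])
    ultimately show "Sm m \<in> sym_distinct"
      using sym_distinct_iff_inj Sm[of m] unfolding sym_mats_def by blast
  qed
qed

lemma L_invar_limit:
  fixes Lm :: "nat \<Rightarrow> real^'n^'n"
  assumes L: "Lm \<longlonglongrightarrow> L" "L \<in> skew_mats" and ob: "\<And>m. orthonormal_basis (ob m)"
    and lim: "\<And>i. (\<lambda>m. ob m i) \<longlonglongrightarrow> po i" and po: "orthonormal_basis po"
    and freq: "\<exists>\<^sub>F m in sequentially. Lm m \<in> L_invar (ob m)"
  shows "L \<in> L_invar po"
proof -
  have freq_block: "\<exists>\<^sub>F m in sequentially. \<exists>J::'n set. 1 \<le> card J \<and> card J < CARD('n) \<and>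
      (\<forall>j\<in>J. \<forall>k. k \<notin> J \<longrightarrow> ob m k \<bullet> (Lm m *v ob m j) = 0)"
    using freq by (rule frequently_elim1) (use L_invar_iff[OF ob] in blast)
  \<comment> \<open>there are only finitely many index sets, so one of them works infinitely often\<close>
  obtain J :: "'n set" where J: "\<exists>\<^sub>F m in sequentially. 1 \<le> card J \<and> card J < CARD('n) \<and>
      (\<forall>j\<in>J. \<forall>k. k \<notin> J \<longrightarrow> ob m k \<bullet> (Lm m *v ob m j) = 0)"
    using frequently_ex_finite[OF freq_block] by blast
  then have card: "1 \<le> card J" "card J < CARD('n)" by (auto dest: frequently_ex)
  have "po k \<bullet> (L *v po j) = 0" if jk: "j \<in> J" "k \<notin> J" for j k
  proof (rule ccontr)
    assume "po k \<bullet> (L *v po j) \<noteq> 0"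
    moreover have "(\<lambda>m. ob m k \<bullet> (Lm m *v ob m j)) \<longlonglongrightarrow> po k \<bullet> (L *v po j)"
      by (intro tendsto_intros L lim)
    ultimately have "\<forall>\<^sub>F m in sequentially. ob m k \<bullet> (Lm m *v ob m j) \<noteq> 0"
      using tendsto_imp_eventually_ne by blast
    moreover have "\<exists>\<^sub>F m in sequentially. ob m k \<bullet> (Lm m *v ob m j) = 0"
      using J by (rule frequently_elim1) (use jk in blast)
    ultimately show False by (simp add: frequently_def)
  qed
  then show ?thesis using L_invar_iff[OF po] L(2) card by blast
qed

lemma graph_l_complement_limit:
  fixes y :: "nat \<Rightarrow> (real^'n^'n) \<times> (real^'n^'n)"
  assumes y: "\<And>m. y m \<in> (sym_mats \<times> skew_mats) - graph_l" and lim: "y \<longlonglongrightarrow> (S, L)"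
  shows "(S, L) \<notin> graph_l"
proof
  assume "(S, L) \<in> graph_l"
  then obtain ob0 where Sd: "S \<in> sym_distinct" and ob0: "eigenbasis S ob0"
    and L: "L \<in> skew_mats" "L \<notin> L_invar ob0"
    unfolding graph_l_def by blast
  define Sm where "Sm m = fst (y m)" for m
  define Lm where "Lm m = snd (y m)" for m
  have Sm: "Sm m \<in> sym_mats" and Lm: "Lm m \<in> skew_mats" and y_eq: "y m = (Sm m, Lm m)" for m
    using y[of m] unfolding Sm_def Lm_def by auto
  have "\<forall>m. \<exists>ob. eigenbasis (Sm m) ob"
    using Sm symmetric_eigenbasis_exists unfolding sym_mats_def by blast
  then obtain ob where ob: "\<And>m. eigenbasis (Sm m) (ob m)" by metis
  have ob_onb: "orthonormal_basis (ob m)" for m using ob[of m] unfolding eigenbasis_def by blast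
  obtain r po where r: "strict_mono r" and ob_lim: "\<And>i. (\<lambda>m. ob (r m) i) \<longlonglongrightarrow> po i"
    and po: "orthonormal_basis po"
    using orthonormal_bases_convergent_subseq[of ob, OF ob_onb] by blast
  have S_lim: "(\<lambda>m. Sm (r m)) \<longlonglongrightarrow> S" and L_lim: "(\<lambda>m. Lm (r m)) \<longlonglongrightarrow> L"
    using LIMSEQ_subseq_LIMSEQ[OF tendsto_fst[OF lim] r] LIMSEQ_subseq_LIMSEQ[OF tendsto_snd[OF lim] r]
    by (simp_all add: Sm_def Lm_def o_def)
  \<comment> \<open>eventually \<open>Sm (r m)\<close> has distinct eigenvalues, so \<open>y (r m) \<notin> graph_l\<close> forces \<open>Lm (r m)\<close> into \<open>L_invar\<close>\<close>
  have "\<forall>\<^sub>F m in sequentially. Sm (r m) \<in> sym_distinct"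
    using sym_distinct_eventually[OF S_lim Sd Sm ob ob_lim po] .
  then have "\<forall>\<^sub>F m in sequentially. Lm (r m) \<in> L_invar (ob (r m))"
  proof (rule eventually_mono)
    fix m assume "Sm (r m) \<in> sym_distinct"
    from graph_l_iff[OF this ob] show "Lm (r m) \<in> L_invar (ob (r m))"
      using y[of "r m"] Lm[of "r m"] unfolding y_eq by blast
  qed
  then have "\<exists>\<^sub>F m in sequentially. Lm (r m) \<in> L_invar (ob (r m))"
    by (simp add: eventually_frequently)
  then have "L \<in> L_invar po"
    by (rule L_invar_limit[OF L_lim L(1) ob_onb ob_lim po])
  then have "L \<in> L_invar ob0"
    using L_invar_eigenbasis_independent[OF Sd eigenbasis_limit[OF S_lim ob ob_lim po] ob0] by blast
  then show False using L(2) by contradiction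
qed

lemma graph_l_openin:
  "openin (top_of_set (sym_mats \<times> skew_mats)) (graph_l :: ((real^'n^'n) \<times> (real^'n^'n)) set)"
proof -
  let ?U = "sym_mats \<times> skew_mats :: ((real^'n^'n) \<times> (real^'n^'n)) set"
  let ?G = "graph_l :: ((real^'n^'n) \<times> (real^'n^'n)) set"
  have "?U - ?G \<subseteq> ?U \<inter> closure (?U - ?G)"
    using closure_subset[of "?U - ?G"] by (simp add: subset_iff)
  moreover have "?U \<inter> closure (?U - ?G) \<subseteq> ?U - ?G"
  proof
    fix z assume z: "z \<in> ?U \<inter> closure (?U - ?G)"
    then obtain x where "\<And>m. x m \<in> ?U - ?G" "x \<longlonglongrightarrow> z"
      by (auto simp: closure_sequential)
    then show "z \<in> ?U - ?G"
      using z graph_l_complement_limit[of x "fst z" "snd z"] by simp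
  qed
  ultimately have "?U - ?G = ?U \<inter> closure (?U - ?G)"
    by (rule equalityI)
  then have "closedin (top_of_set ?U) (?U - ?G)"
    unfolding closedin_closed by (intro exI[of _ "closure (?U - ?G)"]) simp
  moreover have "?G \<subseteq> ?U"
    unfolding graph_l_def sym_distinct_def by blast
  ultimately show ?thesis
    unfolding openin_closedin_eq by simp
qed

theorem lemma5p2:
  assumes "CARD('n) \<ge> 2"
  shows "openin (top_of_set (sym_mats \<times> skew_mats)) (graph_l :: ((real^'n^'n) \<times> (real^'n^'n)) set)
     \<and> sym_mats \<times> skew_mats \<subseteq> closure (graph_l :: ((real^'n^'n) \<times> (real^'n^'n)) set)"
  using graph_l_openin graph_l_dense by blast

end
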